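(* In the setting below, the kernel of $\Phi$ contains the ideal $J_K$ of $\mathbb{Q}[X_{F,e},Y_k:F\in\mathcal{F}_K,k\in K]$ generated by the linear forms $\sum_{F\in\mathcal{F}_K}\langle u,\ell_F\rangle X_{F,e}+\sum_{k\in K}\langle u,\ell_{H_k}\rangle Y_k$ for all $u\in M$.
   Context: Setting: $R$ is a reduced crystallographic root system spanning an $n$-dimensional Euclidean space $V$, with simple system $S=\{\alpha_1,\dots,\alpha_n\}$ identified with $\{1,\dots,n\}$ and Weyl group $W$; $M$ is a lattice with $\mathbb{Z}R\subseteq M\subseteq\{x:2\langle x,\alpha\rangle/\langle\alpha,\alpha\rangle\in\mathbb{Z}\ \forall\alpha\in R\}$; $\Lambda\subset C_S\cap\mathbb{Q}M$ finite with $P=\operatorname{conv}(W(\Lambda))$ full-dimensional, simple (each vertex in exactly $n$ facets) and non-degenerate (no vertex on the boundary of $C_S$); $K\subseteq S$, $W_K$ generated by the reflections $r_k$ in $\alpha_k$, $k\in K$, $H_k$ the fixed hyperplane of $r_k$, $C_K=\{x:\langle x,\alpha_k\rangle\ge0\ \forall k\in K\}$. $\mathcal{F}_K$ is the set of facets of $P$ with barycenter in $C_K$, $W_F$ the stabilizer of $F$ in $W_K$, $\mathcal{F}=\{(F,s):F\in\mathcal{F}_K,s\in W_K/W_F\}$. For a facet $G$ of $P$, $\ell_G$ is its outward normal primitive in $M^\vee=\{y:\langle y,u\rangle\in\mathbb{Z}\ \forall u\in M\}$, and $\ell_{H_k}$ is the primitive outward normal of the facet $H_k\cap P$ of $P\cap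 C_K$. $H^*(X_P;\mathbb{Q})=\mathbb{Q}[X_{F,s}:(F,s)\in\mathcal{F}]/(I_P+J_P)$ for the toric variety $X_P$ of $P$ with respect to $M$, $I_P$ generated by $X_{F_1,s_1}\cdots X_{F_p,s_p}$ with $s_1(F_1)\cap\cdots\cap s_p(F_p)=\emptyset$, $J_P$ generated by $\sum_{(F,s)\in\mathcal{F}}\langle u,\ell_{s(F)}\rangle X_{F,s}$, $u\in M$. For $F\in\mathcal{F}_K$, $s\in W_K$ write $s(\ell_F)-\ell_F=\sum_{k\in K}C_{F,s,k}\ell_{H_k}$ with $C_{F,s,k}\in\mathbb{Q}$ (uniquely determined, depending only on $sW_F$). $\Phi:\mathbb{Q}[X_{F,e},Y_k]\to H^*(X_P;\mathbb{Q})$ is the ring homomorphism with $\Phi(X_{F,e})=\sum_{s\in W_K/W_F}X_{F,s}$, $\Phi(Y_k)=\sum_{(F,s)\in\mathcal{F}}C_{F,s,k}X_{F,s}$. *)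

theory Defs
  imports "HOL-Analysis.Analysis" "HOL-Library.Poly_Mapping"
begin

definition refl :: "'a::real_inner \<Rightarrow> 'a \<Rightarrow> 'a" where
  "refl a x = x - (2 * (x \<bullet> a) / (a \<bullet> a)) *\<^sub>R a"

definition reduced_crystallographic_root_system :: "'a::euclidean_space set \<Rightarrow> bool" where
  "reduced_crystallographic_root_system R \<longleftrightarrow>
     finite R \<and> 0 \<notin> R \<and> span R = UNIV \<and>
     (\<forall>a\<in>R. \<forall>b\<in>R. refl a b \<in> R) \<and>
     (\<forall>a\<in>R. \<forall>b\<in>R. 2 * (b \<bullet> a) / (a \<bullet> a) \<in> \<int>) \<and>
     (\<forall>a\<in>R. \<forall>c::real. c *\<^sub>R a \<in> R \<longrightarrow> c = 1 \<or> c = -1)"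

definition simple_system :: "'a::euclidean_space set \<Rightarrow> (nat \<Rightarrow> 'a) \<Rightarrow> bool" where
  "simple_system R \<alpha> \<longleftrightarrow>
     \<alpha> ` {1..DIM('a)} \<subseteq> R \<and> inj_on \<alpha> {1..DIM('a)} \<and> independent (\<alpha> ` {1..DIM('a)}) \<and>
     (\<forall>b\<in>R. \<exists>c::nat \<Rightarrow> int. b = (\<Sum>i=1..DIM('a). of_int (c i) *\<^sub>R \<alpha> i) \<and>
        ((\<forall>i\<in>{1..DIM('a)}. c i \<ge> 0) \<or> (\<forall>i\<in>{1..DIM('a)}. c i \<le> 0)))"

text \<open>Group (= monoid, since generated by involutions of a finite group) generated by maps.\<close>
inductive_set gen_group :: "('a \<Rightarrow> 'a) set \<Rightarrow> ('a \<Rightarrow> 'a) set" for G where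
  gen_id: "id \<in> gen_group G"
| gen_comp: "g \<in> G \<Longrightarrow> h \<in> gen_group G \<Longrightarrow> g \<circ> h \<in> gen_group G"

definition weyl_group :: "'a::real_inner set \<Rightarrow> ('a \<Rightarrow> 'a) set" where
  "weyl_group R = gen_group (refl ` R)"

definition parabolic :: "(nat \<Rightarrow> 'a::real_inner) \<Rightarrow> nat set \<Rightarrow> ('a \<Rightarrow> 'a) set" where
  "parabolic \<alpha> K = gen_group ((\<lambda>k. refl (\<alpha> k)) ` K)"

definition int_span :: "'a::real_vector set \<Rightarrow> 'a set" where
  "int_span R = {x. \<exists>c::'a \<Rightarrow> int. x = (\<Sum>b\<in>R. of_int (c b) *\<^sub>R b)}"

definition lattice_between :: "'a::real_inner set \<Rightarrow> 'a set \<Rightarrow> bool" where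
  "lattice_between R M \<longleftrightarrow>
     0 \<in> M \<and> (\<forall>x\<in>M. \<forall>y\<in>M. x + y \<in> M) \<and> (\<forall>x\<in>M. - x \<in> M) \<and>
     int_span R \<subseteq> M \<and> M \<subseteq> {x. \<forall>a\<in>R. 2 * (x \<bullet> a) / (a \<bullet> a) \<in> \<int>}"

definition dual_lattice :: "'a::real_inner set \<Rightarrow> 'a set" where
  "dual_lattice M = {y. \<forall>u\<in>M. y \<bullet> u \<in> \<int>}"

definition rat_span :: "'a::real_vector set \<Rightarrow> 'a set" where
  "rat_span M = {x. \<exists>N::int. N > 0 \<and> of_int N *\<^sub>R x \<in> M}"

definition chamber :: "(nat \<Rightarrow> 'a::real_inner) \<Rightarrow> nat set \<Rightarrow> 'a set" where
  "chamber \<alpha> K = {x. \<forall>k\<in>K. 0 \<le> x \<bullet> \<alpha> k}"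

definition polytope_of :: "'a::real_inner set \<Rightarrow> 'a set \<Rightarrow> 'a set" where
  "polytope_of R \<Lambda> = convex hull (\<Union>w\<in>weyl_group R. w ` \<Lambda>)"

definition vertices :: "'a::real_vector set \<Rightarrow> 'a set" where
  "vertices P = {v. v extreme_point_of P}"

definition simple_polytope :: "'a::euclidean_space set \<Rightarrow> bool" where
  "simple_polytope P \<longleftrightarrow> (\<forall>v\<in>vertices P. card {F. F facet_of P \<and> v \<in> F} = DIM('a))"

definition nondegenerate :: "(nat \<Rightarrow> 'a::euclidean_space) \<Rightarrow> 'a set \<Rightarrow> bool" where
  "nondegenerate \<alpha> P \<longleftrightarrow> (\<forall>v\<in>vertices P. v \<notin> frontier (chamber \<alpha> {1..DIM('a)}))"

definition barycenter :: "'a::real_vector set \<Rightarrow> 'a" where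
  "barycenter F = (1 / real (card (vertices F))) *\<^sub>R (\<Sum>v\<in>vertices F. v)"

definition facets_K :: "'a::euclidean_space set \<Rightarrow> (nat \<Rightarrow> 'a) \<Rightarrow> nat set \<Rightarrow> 'a set set" where
  "facets_K P \<alpha> K = {F. F facet_of P \<and> barycenter F \<in> chamber \<alpha> K}"

definition stabilizer :: "('a \<Rightarrow> 'a) set \<Rightarrow> 'a set \<Rightarrow> ('a \<Rightarrow> 'a) set" where
  "stabilizer W F = {w\<in>W. w ` F = F}"

definition left_cosets :: "('a \<Rightarrow> 'a) set \<Rightarrow> ('a \<Rightarrow> 'a) set \<Rightarrow> ('a \<Rightarrow> 'a) set set" where
  "left_cosets W H = {(\<lambda>h. s \<circ> h) ` H | s. s \<in> W}"

definition rep :: "('a \<Rightarrow> 'a) set \<Rightarrow> 'a \<Rightarrow> 'a" where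
  "rep \<sigma> = (SOME s. s \<in> \<sigma>)"

definition index_set ::
  "'a::euclidean_space set \<Rightarrow> (nat \<Rightarrow> 'a) \<Rightarrow> nat set \<Rightarrow> ('a set \<times> ('a \<Rightarrow> 'a) set) set" where
  "index_set P \<alpha> K = {(F, \<sigma>). F \<in> facets_K P \<alpha> K \<and>
       \<sigma> \<in> left_cosets (parabolic \<alpha> K) (stabilizer (parabolic \<alpha> K) F)}"

definition primitive :: "'a::real_inner set \<Rightarrow> 'a \<Rightarrow> bool" where
  "primitive M y \<longleftrightarrow> y \<in> dual_lattice M \<and> y \<noteq> 0 \<and>
     (\<forall>k::nat. \<forall>z\<in>dual_lattice M. y = of_nat k *\<^sub>R z \<longrightarrow> k = 1)"

definition facet_normal :: "'a::real_inner set \<Rightarrow> 'a set \<Rightarrow> 'a set \<Rightarrow> 'a" where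
  "facet_normal M P G = (THE y. primitive M y \<and>
      (\<exists>b. (\<forall>x\<in>P. y \<bullet> x \<le> b) \<and> G = {x\<in>P. y \<bullet> x = b}))"

text \<open>\<open>\<ell>_{H_k}\<close>: primitive outward normal of the facet \<open>H_k \<inter> P\<close> of \<open>P \<inter> C_K\<close>.\<close>
definition wall_normal :: "'a::real_inner set \<Rightarrow> (nat \<Rightarrow> 'a) \<Rightarrow> nat \<Rightarrow> 'a" where
  "wall_normal M \<alpha> k = (THE y. primitive M y \<and> (\<exists>c>0. y = - (c *\<^sub>R \<alpha> k)))"

definition C_coef ::
  "'a::euclidean_space set \<Rightarrow> 'a set \<Rightarrow> (nat \<Rightarrow> 'a) \<Rightarrow> nat set \<Rightarrow> 'a set \<Rightarrow> ('a \<Rightarrow> 'a) set \<Rightarrow> nat \<Rightarrow> rat" where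
  "C_coef M P \<alpha> K F \<sigma> k = (THE c :: nat \<Rightarrow> rat. (\<forall>j. j \<notin> K \<longrightarrow> c j = 0) \<and>
      rep \<sigma> (facet_normal M P F) - facet_normal M P F
        = (\<Sum>j\<in>K. of_rat (c j) *\<^sub>R wall_normal M \<alpha> j)) k"

definition to_rat :: "real \<Rightarrow> rat" where
  "to_rat x = (THE q. of_rat q = x)"

type_synonym 'v mpoly = "('v \<Rightarrow>\<^sub>0 nat) \<Rightarrow>\<^sub>0 rat"

definition Var :: "'v \<Rightarrow> 'v mpoly" where
  "Var v = Poly_Mapping.single (Poly_Mapping.single v 1) 1"

definition Const :: "rat \<Rightarrow> 'v mpoly" where
  "Const c = Poly_Mapping.single 0 c"

definition subst_hom :: "('v \<Rightarrow> 'w mpoly) \<Rightarrow> 'v mpoly \<Rightarrow> 'w mpoly" where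
  "subst_hom f p = (\<Sum>m\<in>Poly_Mapping.keys p. Const (Poly_Mapping.lookup p m) * (\<Prod>x\<in>Poly_Mapping.keys m. f x ^ Poly_Mapping.lookup m x))"

definition ideal_gen :: "'r::comm_ring_1 set \<Rightarrow> 'r set" where
  "ideal_gen G = {\<Sum>i<n. r i * g i | (n::nat) r g. \<forall>i<n. g i \<in> G}"

definition I_P_gens :: "'a::euclidean_space set \<Rightarrow> (nat \<Rightarrow> 'a) \<Rightarrow> nat set
    \<Rightarrow> ('a set \<times> ('a \<Rightarrow> 'a) set) mpoly set" where
  "I_P_gens P \<alpha> K = {prod_list (map Var xs) | xs. xs \<noteq> [] \<and> set xs \<subseteq> index_set P \<alpha> K \<and>
       (\<Inter>(F, \<sigma>)\<in>set xs. rep \<sigma> ` F) = {}}"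

definition J_P_gens :: "'a::euclidean_space set \<Rightarrow> 'a set \<Rightarrow> (nat \<Rightarrow> 'a) \<Rightarrow> nat set
    \<Rightarrow> ('a set \<times> ('a \<Rightarrow> 'a) set) mpoly set" where
  "J_P_gens M P \<alpha> K = {(\<Sum>(F, \<sigma>)\<in>index_set P \<alpha> K.
       Const (to_rat (u \<bullet> facet_normal M P (rep \<sigma> ` F))) * Var (F, \<sigma>)) | u. u \<in> M}"

definition Phi_img :: "'a::euclidean_space set \<Rightarrow> 'a set \<Rightarrow> (nat \<Rightarrow> 'a) \<Rightarrow> nat set
    \<Rightarrow> ('a set + nat) \<Rightarrow> ('a set \<times> ('a \<Rightarrow> 'a) set) mpoly" where
  "Phi_img M P \<alpha> K v = (case v of
      Inl F \<Rightarrow> (if F \<in> facets_K P \<alpha> K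
                then (\<Sum>\<sigma>\<in>left_cosets (parabolic \<alpha> K) (stabilizer (parabolic \<alpha> K) F). Var (F, \<sigma>))
                else 0)
    | Inr k \<Rightarrow> (if k \<in> K
                then (\<Sum>(G, \<sigma>)\<in>index_set P \<alpha> K. Const (C_coef M P \<alpha> K G \<sigma> k) * Var (G, \<sigma>))
                else 0))"

definition J_K_gens :: "'a::euclidean_space set \<Rightarrow> 'a set \<Rightarrow> (nat \<Rightarrow> 'a) \<Rightarrow> nat set
    \<Rightarrow> ('a set + nat) mpoly set" where
  "J_K_gens M P \<alpha> K = {(\<Sum>F\<in>facets_K P \<alpha> K. Const (to_rat (u \<bullet> facet_normal M P F)) * Var (Inl F))
        + (\<Sum>k\<in>K. Const (to_rat (u \<bullet> wall_normal M \<alpha> k)) * Var (Inr k)) | u. u \<in> M}"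

end

theory Submission
  imports Defs
begin

(* Phi is a ring homomorphism, so it suffices that it maps every generator of J_K into J_P.
   The generator of J_K belonging to u \<in> M is sent to
   \<Sum>(F,s). (<u, l_F> + \<Sum>k. <u, l_{H_k}> C_{F,s,k}) X_{F,s}, and by the definition of the C's
   the coefficient is <u, s(l_F)>. The Weyl group acts on P by isometries preserving M and its
   dual lattice, so s(l_F) = l_{s(F)} and the image is the generator of J_P belonging to u.

   The real work lies in showing that the normals and coefficients, which are given by definite
   descriptions, are well defined. A facet of P is spanned by points of QM, so a homogeneous
   rational linear system with fewer equations than unknowns produces a nonzero vector of the
   dual lattice orthogonal to it; dividing out its largest integer factor makes it primitive,
   and a primitive outward normal is unique. The C's exist because s(l_F) - l_F is an integral
   combination of the wall normals, and they are unique because the wall normals are nonzero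
   multiples of the linearly independent simple roots. *)

section \<open>Substitution homomorphisms\<close>

definition eval_monomial :: "('v \<Rightarrow> 'w mpoly) \<Rightarrow> ('v \<Rightarrow>\<^sub>0 nat) \<Rightarrow> 'w mpoly" where
  "eval_monomial f m = (\<Prod>x\<in>Poly_Mapping.keys m. f x ^ Poly_Mapping.lookup m x)"

lemma Const_0 [simp]: "Const 0 = 0"
  by (simp add: Const_def)

lemma Const_add: "Const (a + b) = Const a + Const b"
  by (simp add: Const_def single_add)

lemma Const_mult: "Const (a * b) = Const a * Const b"
  by (simp add: Const_def mult_single)

lemma Const_sum: "Const (sum g A) = (\<Sum>x\<in>A. Const (g x))"
  by (induction A rule: infinite_finite_induct) (auto simp: Const_add)

lemma eval_monomial_eq_prod:
  assumes "finite A" "Poly_Mapping.keys m \<subseteq> A"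
  shows "eval_monomial f m = (\<Prod>x\<in>A. f x ^ Poly_Mapping.lookup m x)"
  unfolding eval_monomial_def
  by (rule prod.mono_neutral_left) (use assms in \<open>auto simp: in_keys_iff\<close>)

lemma eval_monomial_add: "eval_monomial f (m1 + m2) = eval_monomial f m1 * eval_monomial f m2"
proof -
  let ?A = "Poly_Mapping.keys m1 \<union> Poly_Mapping.keys m2"
  have "eval_monomial f (m1 + m2) = (\<Prod>x\<in>?A. f x ^ Poly_Mapping.lookup (m1 + m2) x)"
    by (rule eval_monomial_eq_prod) (auto simp: keys_add)
  also have "\<dots> = (\<Prod>x\<in>?A. f x ^ Poly_Mapping.lookup m1 x) * (\<Prod>x\<in>?A. f x ^ Poly_Mapping.lookup m2 x)"
    by (simp add: lookup_add power_add prod.distrib)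
  also have "\<dots> = eval_monomial f m1 * eval_monomial f m2"
    using eval_monomial_eq_prod[of ?A m1 f] eval_monomial_eq_prod[of ?A m2 f] by simp
  finally show ?thesis .
qed

lemma subst_hom_eq_sum:
  assumes "finite A" "Poly_Mapping.keys p \<subseteq> A"
  shows "subst_hom f p = (\<Sum>m\<in>A. Const (Poly_Mapping.lookup p m) * eval_monomial f m)"
  unfolding subst_hom_def eval_monomial_def
  by (rule sum.mono_neutral_left) (use assms in \<open>auto simp: in_keys_iff\<close>)

lemma subst_hom_0 [simp]: "subst_hom f 0 = 0"
  by (simp add: subst_hom_def)

lemma subst_hom_add: "subst_hom f (p + q) = subst_hom f p + subst_hom f q"
proof -
  let ?A = "Poly_Mapping.keys p \<union> Poly_Mapping.keys q"
  have "subst_hom f (p + q) = (\<Sum>m\<in>?A. Const (Poly_Mapping.lookup (p + q) m) * eval_monomial f m)"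
    by (rule subst_hom_eq_sum) (auto simp: keys_add)
  also have "\<dots> = (\<Sum>m\<in>?A. Const (Poly_Mapping.lookup p m) * eval_monomial f m)
                 + (\<Sum>m\<in>?A. Const (Poly_Mapping.lookup q m) * eval_monomial f m)"
    by (simp add: lookup_add Const_add distrib_right sum.distrib)
  also have "\<dots> = subst_hom f p + subst_hom f q"
    using subst_hom_eq_sum[of ?A p f] subst_hom_eq_sum[of ?A q f] by simp
  finally show ?thesis .
qed

lemma subst_hom_sum: "subst_hom f (sum g A) = (\<Sum>x\<in>A. subst_hom f (g x))"
  by (induction A rule: infinite_finite_induct) (auto simp: subst_hom_add)

lemma subst_hom_single: "subst_hom f (Poly_Mapping.single m c) = Const c * eval_monomial f m"
  by (subst subst_hom_eq_sum[of "{m}"]) auto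

lemma subst_hom_Var: "subst_hom f (Var v) = f v"
  by (simp add: Var_def subst_hom_single eval_monomial_def Const_def)

lemma subst_hom_Const: "subst_hom f (Const c) = Const c"
  by (simp add: Const_def subst_hom_single eval_monomial_def)

lemma poly_mapping_induct_single:
  assumes "P 0" "\<And>p m c. P p \<Longrightarrow> P (p + Poly_Mapping.single m c)"
  shows "P (p :: 'a \<Rightarrow>\<^sub>0 'b::monoid_add)"
proof (induction p rule: update_induct)
  case const
  then show ?case using assms(1) by simp
next
  case (update f a b)
  have "Poly_Mapping.update a b f = f + Poly_Mapping.single a b"
    using update(1)
    by (intro poly_mapping_eqI) (auto simp: lookup_add lookup_single in_keys_iff when_def update.rep_eq)
  then show ?case using assms(2) update by simp
qed

lemma subst_hom_mult: "subst_hom f (p * q) = subst_hom f p * subst_hom f q"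
proof (induction p rule: poly_mapping_induct_single)
  case (2 p m c)
  have "subst_hom f (Poly_Mapping.single m c * q) = subst_hom f (Poly_Mapping.single m c) * subst_hom f q"
    by (induction q rule: poly_mapping_induct_single)
      (simp_all add: distrib_left subst_hom_add mult_single subst_hom_single eval_monomial_add
        Const_mult ac_simps)
  then show ?case using 2 by (simp add: distrib_right subst_hom_add)
qed simp

lemma subst_hom_ideal_gen:
  assumes "\<And>g. g \<in> G \<Longrightarrow> subst_hom f g \<in> H" and "p \<in> ideal_gen G"
  shows "subst_hom f p \<in> ideal_gen H"
proof -
  obtain n :: nat and r g where p: "p = (\<Sum>i<n. r i * g i)" and g: "\<forall>i<n. g i \<in> G"
    using assms(2) unfolding ideal_gen_def by auto
  have "subst_hom f p = (\<Sum>i<n. subst_hom f (r i) * subst_hom f (g i))"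
    unfolding p by (simp add: subst_hom_sum subst_hom_mult)
  moreover have "\<forall>i<n. subst_hom f (g i) \<in> H"
    using g assms(1) by blast
  ultimately show ?thesis
    unfolding ideal_gen_def
    by (intro CollectI exI[of _ n] exI[of _ "\<lambda>i. subst_hom f (r i)"] exI[of _ "\<lambda>i. subst_hom f (g i)"])
      simp
qed

section \<open>Reflections and the groups they generate\<close>

lemma refl_linear: "linear (refl a)"
  by (rule linearI) (simp_all add: refl_def inner_add_left add_divide_distrib scaleR_add_left
      scaleR_diff_right algebra_simps)

lemma refl_self_adjoint: "refl a x \<bullet> y = x \<bullet> refl a y"
  by (simp add: refl_def inner_diff_left inner_diff_right inner_commute algebra_simps)

(* No hypothesis a \<noteq> 0 is needed: refl 0 is the identity because 0 / 0 = 0. *)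
lemma refl_refl [simp]: "refl a (refl a x) = x"
proof (cases "a = 0")
  case False
  then have "refl a x \<bullet> a = - (x \<bullet> a)"
    by (simp add: refl_def inner_diff_left)
  then show ?thesis by (simp add: refl_def)
qed (simp add: refl_def)

lemma orthogonal_transformation_refl: "orthogonal_transformation (refl a)"
  by (simp add: orthogonal_transformation_def refl_linear refl_self_adjoint)

definition coroot :: "'a::real_inner \<Rightarrow> 'a" where
  "coroot a = (2 / (a \<bullet> a)) *\<^sub>R a"

lemma refl_eq_coroot: "refl a x = x - (x \<bullet> a) *\<^sub>R coroot a"
  by (simp add: refl_def coroot_def)

lemma gen_group_comp: "g \<in> gen_group G \<Longrightarrow> h \<in> gen_group G \<Longrightarrow> g \<circ> h \<in> gen_group G"
  by (induction g rule: gen_group.induct) (auto simp: comp_assoc intro: gen_group.intros)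

lemma gen_group_mono:
  assumes "G \<subseteq> H"
  shows "gen_group G \<subseteq> gen_group H"
proof
  fix g assume "g \<in> gen_group G"
  then show "g \<in> gen_group H"
  proof induction
    case gen_id
    show ?case by (rule gen_group.gen_id)
  next
    case (gen_comp g h)
    then show ?case using assms by (intro gen_group.gen_comp) auto
  qed
qed

lemma gen_group_inverse:
  assumes "\<And>g. g \<in> G \<Longrightarrow> g \<circ> g = id" and "g \<in> gen_group G"
  obtains h where "h \<in> gen_group G" "h \<circ> g = id" "g \<circ> h = id"
proof -
  have "\<exists>h\<in>gen_group G. h \<circ> g = id \<and> g \<circ> h = id"
    using assms(2)
  proof (induction g rule: gen_group.induct)
    case gen_id
    show ?case by (rule bexI[of _ id]) (auto intro: gen_group.gen_id)
  next
    case (gen_comp g h)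
    then obtain h' where h': "h' \<in> gen_group G" "h' \<circ> h = id" "h \<circ> h' = id" by blast
    have "h' \<circ> g \<in> gen_group G"
      using gen_group_comp[OF h'(1) gen_group.gen_comp[OF gen_comp(1) gen_group.gen_id]] by simp
    moreover have "(h' \<circ> g) \<circ> (g \<circ> h) = id" "(g \<circ> h) \<circ> (h' \<circ> g) = id"
      using assms(1)[OF gen_comp(1)] h' by (metis comp_assoc comp_id)+
    ultimately show ?case by blast
  qed
  then show ?thesis using that by blast
qed

lemma gen_group_preserves:
  assumes "\<And>g. g \<in> G \<Longrightarrow> g ` A \<subseteq> A" and "h \<in> gen_group G"
  shows "h ` A \<subseteq> A"
  using assms(2) by induction (use assms(1) in \<open>auto simp: image_comp[symmetric]\<close>)

lemma gen_group_orthogonal: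
  assumes "\<And>g. g \<in> G \<Longrightarrow> orthogonal_transformation g" and "h \<in> gen_group G"
  shows "orthogonal_transformation h"
  using assms(2)
proof induction
  case gen_id
  show ?case using orthogonal_transformation_id by (simp add: id_def)
next
  case (gen_comp g h)
  then show ?case using assms(1) orthogonal_transformation_compose by blast
qed

section \<open>Rational linear algebra\<close>

lemma of_rat_to_rat: "r \<in> \<rat> \<Longrightarrow> of_rat (to_rat r) = r"
  by (auto elim!: Rats_cases simp: to_rat_def)

lemma to_rat_of_rat [simp]: "to_rat (of_rat q) = q"
  by (simp add: to_rat_def)

lemma homogeneous_system_pivot:
  fixes A :: "'j \<Rightarrow> 'i \<Rightarrow> 'f::field"
  assumes "finite I" "p \<in> I" "A j p \<noteq> 0"
    and y: "\<forall>j'\<in>J. (\<Sum>i\<in>I - {p}. (A j' i - A j' p / A j p * A j i) * y i) = 0"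
  defines "c \<equiv> - (\<Sum>i\<in>I - {p}. A j i * y i) / A j p"
  shows "\<forall>j'\<in>insert j J. (\<Sum>i\<in>I. A j' i * (y(p := c)) i) = 0"
proof
  fix j' assume j': "j' \<in> insert j J"
  have "(\<Sum>i\<in>I - {p}. A j' i * (y(p := c)) i) = (\<Sum>i\<in>I - {p}. A j' i * y i)"
    by (rule sum.cong) auto
  then have split: "(\<Sum>i\<in>I. A j' i * (y(p := c)) i) = A j' p * c + (\<Sum>i\<in>I - {p}. A j' i * y i)"
    using sum.remove[OF assms(1,2), of "\<lambda>i. A j' i * (y(p := c)) i"] by simp
  show "(\<Sum>i\<in>I. A j' i * (y(p := c)) i) = 0"
  proof (cases "j' = j")
    case True
    have "A j' p * c + (\<Sum>i\<in>I - {p}. A j' i * y i) = 0"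
      using True assms(3) by (simp add: c_def)
    then show ?thesis
      unfolding split .
  next
    case False
    have "(\<Sum>i\<in>I - {p}. (A j' i - A j' p / A j p * A j i) * y i)
        = (\<Sum>i\<in>I - {p}. A j' i * y i) - A j' p / A j p * (\<Sum>i\<in>I - {p}. A j i * y i)"
      unfolding left_diff_distrib sum_subtractf sum_distrib_left by (simp add: mult.assoc)
    then have "(\<Sum>i\<in>I - {p}. A j' i * y i) = - (A j' p * c)"
      using False j' y assms(3) by (simp add: c_def)
    then show ?thesis
      unfolding split by simp
  qed
qed

lemma homogeneous_system_nontrivial_solution:
  fixes A :: "'j \<Rightarrow> 'i \<Rightarrow> 'f::field"
  assumes "finite J" "finite I" "card J < card I"
  shows "\<exists>x. (\<exists>i\<in>I. x i \<noteq> 0) \<and> (\<forall>j\<in>J. (\<Sum>i\<in>I. A j i * x i) = 0)"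
  using assms
proof (induction J arbitrary: I A rule: finite_induct)
  case empty
  then obtain i where "i \<in> I" by fastforce
  then show ?case by (intro exI[of _ "\<lambda>_. 1"]) auto
next
  case (insert j J)
  have card_J: "Suc (card J) < card I"
    using insert.hyps insert.prems(2) by simp
  show ?case
  proof (cases "\<forall>i\<in>I. A j i = 0")
    case True
    obtain x where "\<exists>i\<in>I. x i \<noteq> 0" "\<forall>j\<in>J. (\<Sum>i\<in>I. A j i * x i) = 0"
      using insert.IH[of I A] insert.prems(1) card_J by auto
    with True show ?thesis by auto
  next
    case False
    then obtain p where p: "p \<in> I" "A j p \<noteq> 0" by blast
    have "card J < card (I - {p})"
      using card_J p(1) by (simp add: card_Diff_singleton)
    then obtain y where y: "\<exists>i\<in>I - {p}. y i \<noteq> 0"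
      "\<forall>j'\<in>J. (\<Sum>i\<in>I - {p}. (A j' i - A j' p / A j p * A j i) * y i) = 0"
      using insert.IH[of "I - {p}" "\<lambda>j' i. A j' i - A j' p / A j p * A j i"] insert.prems(1)
      by auto
    obtain i where i: "i \<in> I - {p}" "y i \<noteq> 0"
      using y(1) by blast
    define c where "c = - (\<Sum>i\<in>I - {p}. A j i * y i) / A j p"
    have "\<forall>j'\<in>insert j J. (\<Sum>i\<in>I. A j' i * (y(p := c)) i) = 0"
      unfolding c_def by (rule homogeneous_system_pivot[OF insert.prems(1) p y(2)])
    moreover have "(y(p := c)) i \<noteq> 0"
      using i by simp
    ultimately show ?thesis
      using i(1) by blast
  qed
qed

section \<open>Lattices, dual lattices and primitive vectors\<close>

lemma dual_lattice_0: "0 \<in> dual_lattice M"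
  by (simp add: dual_lattice_def)

lemma dual_lattice_add: "y \<in> dual_lattice M \<Longrightarrow> z \<in> dual_lattice M \<Longrightarrow> y + z \<in> dual_lattice M"
  by (simp add: dual_lattice_def inner_add_left)

lemma dual_lattice_scaleR_int: "y \<in> dual_lattice M \<Longrightarrow> of_int k *\<^sub>R y \<in> dual_lattice M"
  by (simp add: dual_lattice_def)

lemma rat_span_dual_lattice_sum:
  assumes "finite I" "b ` I \<subseteq> dual_lattice M"
  shows "(\<Sum>i\<in>I. of_rat (q i) *\<^sub>R b i) \<in> rat_span (dual_lattice M)"
  using assms
proof (induction I rule: finite_induct)
  case empty
  show ?case by (auto simp: rat_span_def dual_lattice_0 intro: exI[of _ 1])
next
  case (insert i I)
  then obtain N where N: "N > 0" "of_int N *\<^sub>R (\<Sum>i\<in>I. of_rat (q i) *\<^sub>R b i) \<in> dual_lattice M"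
    by (auto simp: rat_span_def)
  obtain p d where pd: "quotient_of (q i) = (p, d)" by fastforce
  have d: "d > 0" "q i = of_int p / of_int d"
    using quotient_of_denom_pos[OF pd] quotient_of_div[OF pd] by auto
  have "of_int (N * d) *\<^sub>R (\<Sum>i\<in>insert i I. of_rat (q i) *\<^sub>R b i)
      = of_int (N * p) *\<^sub>R b i + of_int d *\<^sub>R (of_int N *\<^sub>R (\<Sum>i\<in>I. of_rat (q i) *\<^sub>R b i))"
    using insert.hyps d by (simp add: of_rat_divide scaleR_add_right)
  also have "\<dots> \<in> dual_lattice M"
    using insert.prems dual_lattice_scaleR_int[OF N(2), of d]
    by (intro dual_lattice_add dual_lattice_scaleR_int[of "b i"]) auto
  finally show ?case
    using N(1) d(1) unfolding rat_span_def by (intro CollectI exI[of _ "N * d"]) simp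
qed

lemma dual_lattice_inner_rat_span:
  assumes "x \<in> rat_span M" "y \<in> dual_lattice M"
  shows "y \<bullet> x \<in> \<rat>"
proof -
  obtain N where N: "N > 0" "of_int N *\<^sub>R x \<in> M"
    using assms(1) by (auto simp: rat_span_def)
  then have "y \<bullet> (of_int N *\<^sub>R x) \<in> \<int>"
    using assms(2) unfolding dual_lattice_def by blast
  then have "of_int N * (y \<bullet> x) \<in> \<int>"
    by simp
  then have "of_int N * (y \<bullet> x) / of_int N \<in> \<rat>"
    using Ints_subset_Rats by (intro Rats_divide) auto
  with N(1) show ?thesis by simp
qed

lemma dual_lattice_orthogonal_exists:
  assumes "finite I" "finite D" "card D < card I"
    and b: "b ` I \<subseteq> dual_lattice M"
    and b_indep: "\<And>c. (\<Sum>i\<in>I. c i *\<^sub>R b i) = 0 \<Longrightarrow> \<forall>i\<in>I. c i = 0"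
    and b_rat: "\<And>i d. i \<in> I \<Longrightarrow> d \<in> D \<Longrightarrow> b i \<bullet> d \<in> \<rat>"
  shows "\<exists>y\<in>dual_lattice M. y \<noteq> 0 \<and> (\<forall>d\<in>D. y \<bullet> d = 0)"
proof -
  obtain x where x: "\<exists>i\<in>I. x i \<noteq> 0" "\<forall>d\<in>D. (\<Sum>i\<in>I. to_rat (b i \<bullet> d) * x i) = 0"
    using homogeneous_system_nontrivial_solution[OF assms(2,1,3), of "\<lambda>d i. to_rat (b i \<bullet> d)"]
    by blast
  define y0 where "y0 = (\<Sum>i\<in>I. of_rat (x i) *\<^sub>R b i)"
  obtain N where N: "N > 0" "of_int N *\<^sub>R y0 \<in> dual_lattice M"
    using rat_span_dual_lattice_sum[OF assms(1) b, of x] unfolding rat_span_def y0_def by auto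
  have "y0 \<noteq> 0"
  proof
    assume "y0 = 0"
    then have "\<forall>i\<in>I. of_rat (x i) = (0::real)"
      using b_indep[of "\<lambda>i. of_rat (x i)"] unfolding y0_def by blast
    with x(1) show False by simp
  qed
  moreover have "y0 \<bullet> d = 0" if "d \<in> D" for d
  proof -
    have "y0 \<bullet> d = (\<Sum>i\<in>I. of_rat (x i) * (b i \<bullet> d))"
      by (simp add: y0_def inner_sum_left)
    also have "\<dots> = (\<Sum>i\<in>I. of_rat (to_rat (b i \<bullet> d) * x i))"
      using b_rat[OF _ that] by (intro sum.cong) (simp_all add: of_rat_mult of_rat_to_rat)
    also have "\<dots> = 0"
      using x(2) that by (simp add: of_rat_sum[symmetric])
    finally show ?thesis .
  qed
  ultimately show ?thesis
    using N by (intro bexI[OF _ N(2)]) simp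
qed

lemma lattice_scaleR_int:
  assumes "lattice_between R M" "x \<in> M"
  shows "of_int k *\<^sub>R x \<in> M"
proof -
  have nat: "of_nat m *\<^sub>R x \<in> M" for m
    by (induction m) (use assms in \<open>auto simp: lattice_between_def scaleR_add_left\<close>)
  show ?thesis
  proof (cases "k \<ge> 0")
    case True
    then show ?thesis using nat[of "nat k"] by simp
  next
    case False
    then have "of_int k *\<^sub>R x = - (of_nat (nat (- k)) *\<^sub>R x)" by simp
    then show ?thesis using nat[of "nat (- k)"] assms(1) by (simp add: lattice_between_def)
  qed
qed

lemma lattice_contains_roots:
  assumes "lattice_between R M" "finite R" "a \<in> R"
  shows "a \<in> M"
proof -
  have "(\<Sum>b\<in>R. of_int (if b = a then 1 else 0) *\<^sub>R b) = (\<Sum>b\<in>R. if b = a then b else 0)"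
    by (rule sum.cong) auto
  also have "\<dots> = a"
    using assms(2,3) by (simp add: sum.delta')
  finally have "(\<Sum>b\<in>R. of_int (if b = a then 1 else 0) *\<^sub>R b) = a" .
  then have "a \<in> int_span R"
    unfolding int_span_def by (intro CollectI exI[of _ "\<lambda>b. if b = a then 1 else 0"]) simp
  with assms(1) show ?thesis by (auto simp: lattice_between_def)
qed

lemma lattice_refl:
  assumes "lattice_between R M" "finite R" "a \<in> R" "x \<in> M"
  shows "refl a x \<in> M"
proof -
  have "2 * (x \<bullet> a) / (a \<bullet> a) \<in> \<int>"
    using assms(1,3,4) by (auto simp: lattice_between_def)
  then obtain k where k: "2 * (x \<bullet> a) / (a \<bullet> a) = of_int k"
    by (elim Ints_cases)
  have "of_int (- k) *\<^sub>R a \<in> M"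
    using lattice_scaleR_int lattice_contains_roots assms by blast
  then have "x + of_int (- k) *\<^sub>R a \<in> M"
    using assms(1,4) by (auto simp: lattice_between_def)
  then show ?thesis by (simp add: refl_def k)
qed

lemma coroot_dual_lattice:
  assumes "lattice_between R M" "a \<in> R"
  shows "coroot a \<in> dual_lattice M"
  using assms by (auto simp: lattice_between_def dual_lattice_def coroot_def inner_commute)

lemma spanning_set_inner_nonzero:
  assumes "span M = UNIV" "y \<noteq> 0"
  obtains u where "u \<in> M" "y \<bullet> u \<noteq> 0"
proof -
  have "\<not> M \<subseteq> {x. y \<bullet> x = 0}"
  proof
    assume "M \<subseteq> {x. y \<bullet> x = 0}"
    then have "span M \<subseteq> {x. y \<bullet> x = 0}"
      by (rule span_minimal) (rule subspace_hyperplane)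
    with assms(1) have "y \<bullet> y = 0" by blast
    with assms(2) show False by simp
  qed
  then show ?thesis using that by blast
qed

lemma dual_lattice_ratio_rational:
  assumes "span M = UNIV" "y \<in> dual_lattice M" "t *\<^sub>R y \<in> dual_lattice M" "y \<noteq> 0"
  shows "t \<in> \<rat>"
proof -
  obtain u where u: "u \<in> M" "y \<bullet> u \<noteq> 0"
    using spanning_set_inner_nonzero[OF assms(1,4)] by blast
  have "y \<bullet> u \<in> \<int>" "t * (y \<bullet> u) \<in> \<int>"
    using assms(2,3) u(1) by (auto simp: dual_lattice_def)
  then have "t * (y \<bullet> u) / (y \<bullet> u) \<in> \<rat>"
    using Ints_subset_Rats by (intro Rats_divide) auto
  with u(2) show ?thesis by simp
qed

lemma primitive_positive_multiple_eq:
  assumes "span M = UNIV" "primitive M y" "primitive M (t *\<^sub>R y)" "t > 0"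
  shows "t = 1"
proof -
  have y: "y \<in> dual_lattice M" "y \<noteq> 0" and ty: "t *\<^sub>R y \<in> dual_lattice M"
    using assms(2,3) by (auto simp: primitive_def)
  obtain p q :: int where pq: "q > 0" "coprime p q" "t = of_int p / of_int q"
    using dual_lattice_ratio_rational[OF assms(1) y(1) ty y(2)] by (rule Rats_cases')
  have qt: "of_int q * t = of_int p"
    using pq(1,3) by simp
  have "p > 0"
    using pq(1,3) assms(4) by (simp add: zero_less_divide_iff)
  obtain u v where uv: "u * p + v * q = 1"
    using bezout_int[of p q] pq(2) by auto
  define z where "z = of_int u *\<^sub>R (t *\<^sub>R y) + of_int v *\<^sub>R y"
  have z: "z \<in> dual_lattice M"
    unfolding z_def using y ty by (intro dual_lattice_add dual_lattice_scaleR_int)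
  have "of_int q *\<^sub>R z = (of_int u * (of_int q * t) + of_int v * of_int q) *\<^sub>R y"
    by (simp add: z_def scaleR_add_right scaleR_add_left mult_ac)
  also have "\<dots> = of_int (u * p + v * q) *\<^sub>R y"
    unfolding qt by simp
  finally have "y = of_nat (nat q) *\<^sub>R z"
    using uv pq(1) by simp
  then have "nat q = 1"
    using assms(2) z unfolding primitive_def by blast
  then have "q = 1"
    using pq(1) by simp
  then have "t *\<^sub>R y = of_nat (nat p) *\<^sub>R y"
    using pq(3) \<open>p > 0\<close> by simp
  then have "nat p = 1"
    using assms(3) y(1) unfolding primitive_def by blast
  with pq(3) \<open>q = 1\<close> show ?thesis
    by simp
qed

lemma finite_dual_lattice_divisors:
  assumes "span M = UNIV" "y \<noteq> 0"
  shows "finite {k::nat. \<exists>z\<in>dual_lattice M. y = of_nat k *\<^sub>R z}"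
proof -
  obtain u where u: "u \<in> M" "y \<bullet> u \<noteq> 0"
    using spanning_set_inner_nonzero[OF assms] by blast
  have bound: "k \<le> nat \<lceil>\<bar>y \<bullet> u\<bar>\<rceil>" if "z \<in> dual_lattice M" "y = of_nat k *\<^sub>R z" for k z
  proof -
    have "z \<bullet> u \<in> \<int>"
      using that(1) u(1) unfolding dual_lattice_def by blast
    moreover have "z \<bullet> u \<noteq> 0"
      using that(2) u(2) by auto
    ultimately have "1 \<le> \<bar>z \<bullet> u\<bar>"
      by (rule Ints_nonzero_abs_ge1)
    then have "real k \<le> \<bar>y \<bullet> u\<bar>"
      using mult_left_mono[of 1 "\<bar>z \<bullet> u\<bar>" "real k"] that(2) by (simp add: abs_mult)
    also have "\<dots> \<le> of_int \<lceil>\<bar>y \<bullet> u\<bar>\<rceil>"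
      by (rule le_of_int_ceiling)
    finally have "of_int (int k) \<le> (of_int \<lceil>\<bar>y \<bullet> u\<bar>\<rceil> :: real)"
      by simp
    then have "int k \<le> \<lceil>\<bar>y \<bullet> u\<bar>\<rceil>"
      by (simp only: of_int_le_iff)
    then show ?thesis
      by simp
  qed
  show ?thesis
    by (rule finite_subset[of _ "{..nat \<lceil>\<bar>y \<bullet> u\<bar>\<rceil>}"]) (use bound in \<open>auto simp: atMost_def\<close>)
qed

lemma dual_lattice_primitive_multiple:
  assumes "span M = UNIV" "y \<in> dual_lattice M" "y \<noteq> 0"
  obtains k z where "k \<ge> 1" "y = of_nat k *\<^sub>R z" "primitive M z"
proof -
  define Ks where "Ks = {k::nat. \<exists>z\<in>dual_lattice M. y = of_nat k *\<^sub>R z}"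
  have fin: "finite Ks"
    unfolding Ks_def by (rule finite_dual_lattice_divisors[OF assms(1,3)])
  have one: "1 \<in> Ks"
    using assms(2) by (auto simp: Ks_def)
  define k where "k = Max Ks"
  have k: "k \<in> Ks" "k \<ge> 1"
    using Max_in[OF fin] Max_ge[OF fin one] one unfolding k_def by auto
  obtain z where z: "z \<in> dual_lattice M" "y = of_nat k *\<^sub>R z"
    using k(1) unfolding Ks_def by blast
  have "primitive M z"
    unfolding primitive_def
  proof (intro conjI allI ballI impI)
    show "z \<noteq> 0" using z(2) assms(3) by auto
  next
    fix m :: nat and z' assume z': "z' \<in> dual_lattice M" "z = of_nat m *\<^sub>R z'"
    then have "k * m \<in> Ks"
      using z(2) unfolding Ks_def by (intro CollectI bexI[OF _ z'(1)]) simp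
    then have "k * m \<le> k * 1"
      using Max_ge[OF fin] unfolding k_def by simp
    moreover have "m \<noteq> 0"
      using z' z(2) assms(3) by auto
    ultimately show "m = 1"
      using k(2) by simp
  qed (rule z(1))
  then show ?thesis using that k(2) z(2) by blast
qed

section \<open>Primitive facet normals\<close>

lemma orthogonal_to_hyperplane_direction:
  fixes a y :: "'a::euclidean_space"
  assumes "a \<noteq> 0" "T \<subseteq> {x. a \<bullet> x = 0}" "dim T = DIM('a) - 1" "T \<subseteq> {x. y \<bullet> x = 0}"
  shows "y = (y \<bullet> a / (a \<bullet> a)) *\<^sub>R a"
proof -
  have "span T \<subseteq> {x. a \<bullet> x = 0}"
    using assms(2) subspace_hyperplane by (rule span_minimal)
  then have "span T = {x. a \<bullet> x = 0}"
    using assms(1,3) by (intro subspace_dim_equal subspace_span subspace_hyperplane) (simp_all add: dim_hyperplane)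
  moreover have "span T \<subseteq> {x. y \<bullet> x = 0}"
    using assms(4) subspace_hyperplane by (rule span_minimal)
  ultimately have orth: "a \<bullet> x = 0 \<Longrightarrow> y \<bullet> x = 0" for x
    by blast
  define z where "z = y - (y \<bullet> a / (a \<bullet> a)) *\<^sub>R a"
  have "a \<bullet> z = 0"
    using assms(1) by (simp add: z_def inner_diff_right inner_commute)
  then have "z \<bullet> z = 0"
    using orth[of z] by (simp add: z_def inner_diff_left inner_commute)
  then show ?thesis by (simp add: z_def)
qed

definition is_facet_normal :: "'a::real_inner set \<Rightarrow> 'a set \<Rightarrow> 'a set \<Rightarrow> 'a \<Rightarrow> bool" where
  "is_facet_normal M P G y \<longleftrightarrow> primitive M y \<and> (\<exists>b. (\<forall>x\<in>P. y \<bullet> x \<le> b) \<and> G = {x\<in>P. y \<bullet> x = b})"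

lemma facet_normal_eq_The: "facet_normal M P G = (THE y. is_facet_normal M P G y)"
  by (simp add: facet_normal_def is_facet_normal_def)

lemma facet_aff_dim:
  fixes P :: "'a::euclidean_space set"
  assumes "aff_dim P = DIM('a)" "F facet_of P"
  shows "aff_dim F = int DIM('a) - 1"
  using assms by (simp add: facet_of_def)

lemma facet_direction_dim:
  fixes P :: "'a::euclidean_space set"
  assumes "aff_dim P = DIM('a)" "F facet_of P" "x0 \<in> F"
  shows "dim ((\<lambda>x. x - x0) ` F) = DIM('a) - 1"
proof -
  have "aff_dim F = int (dim ((\<lambda>x. x - x0) ` F))"
    using assms(3) by (intro aff_dim_eq_dim_subtract hull_inc)
  with facet_aff_dim[OF assms(1,2)] show ?thesis
    by linarith
qed

lemma facet_normals_positive_multiple: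
  fixes P :: "'a::euclidean_space set"
  assumes "aff_dim P = DIM('a)" "F facet_of P" "y1 \<noteq> 0" "y2 \<noteq> 0"
    and b1: "\<forall>x\<in>P. y1 \<bullet> x \<le> b1" "F = {x\<in>P. y1 \<bullet> x = b1}"
    and b2: "\<forall>x\<in>P. y2 \<bullet> x \<le> b2" "F = {x\<in>P. y2 \<bullet> x = b2}"
  obtains s where "s > 0" "y2 = s *\<^sub>R y1"
proof -
  obtain x0 where x0: "x0 \<in> F"
    using assms(2) by (auto simp: facet_of_def)
  let ?T = "(\<lambda>x. x - x0) ` F"
  have "y1 \<bullet> x = b1" "y2 \<bullet> x = b2" if "x \<in> F" for x
    using that b1(2) b2(2) by blast+
  then have "?T \<subseteq> {x. y1 \<bullet> x = 0}" "?T \<subseteq> {x. y2 \<bullet> x = 0}"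
    using x0 by (auto simp: inner_diff_right)
  then obtain s where s: "y2 = s *\<^sub>R y1"
    using orthogonal_to_hyperplane_direction[OF assms(3) _ facet_direction_dim[OF assms(1,2) x0]]
    by blast
  have "F \<subseteq> P" "F \<noteq> P"
    using assms(2) by (auto simp: facet_of_def face_of_imp_subset)
  then obtain x where x: "x \<in> P" "x \<notin> F"
    by blast
  have "y1 \<bullet> x \<le> b1" "y1 \<bullet> x \<noteq> b1"
    using x b1 by auto
  moreover have "b2 = s * b1"
    using x0 b1(2) b2(2) s by auto
  moreover have "s * (y1 \<bullet> x) \<le> b2"
    using b2(1) x(1) s by simp
  ultimately have "s \<ge> 0"
    using mult_strict_left_mono_neg[of "y1 \<bullet> x" b1 s] by linarith
  moreover have "s \<noteq> 0"
    using s assms(4) by auto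
  ultimately have "s > 0"
    by simp
  then show ?thesis
    using that s by blast
qed

lemma facet_normal_unique:
  fixes P :: "'a::euclidean_space set"
  assumes "span M = UNIV" "aff_dim P = DIM('a)" "F facet_of P"
    and "is_facet_normal M P F y1" "is_facet_normal M P F y2"
  shows "y1 = y2"
proof -
  obtain b1 where b1: "\<forall>x\<in>P. y1 \<bullet> x \<le> b1" "F = {x\<in>P. y1 \<bullet> x = b1}" and p1: "primitive M y1"
    using assms(4) by (auto simp: is_facet_normal_def)
  obtain b2 where b2: "\<forall>x\<in>P. y2 \<bullet> x \<le> b2" "F = {x\<in>P. y2 \<bullet> x = b2}" and p2: "primitive M y2"
    using assms(5) by (auto simp: is_facet_normal_def)
  have "y1 \<noteq> 0" "y2 \<noteq> 0"
    using p1 p2 by (auto simp: primitive_def)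
  then obtain s where s: "s > 0" "y2 = s *\<^sub>R y1"
    using facet_normals_positive_multiple[OF assms(2,3) _ _ b1 b2] by blast
  then have "s = 1"
    using primitive_positive_multiple_eq[OF assms(1) p1] p2 by simp
  with s show ?thesis by simp
qed

lemma facet_normal_eqI:
  fixes P :: "'a::euclidean_space set"
  assumes "span M = UNIV" "aff_dim P = DIM('a)" "F facet_of P" "is_facet_normal M P F y"
  shows "facet_normal M P F = y"
  unfolding facet_normal_eq_The
  using assms facet_normal_unique[OF assms(1-3)] by blast

lemma primitive_image:
  assumes g: "orthogonal_transformation g" "g ` dual_lattice M = dual_lattice M"
    and prim: "primitive M y"
  shows "primitive M (g y)"
  unfolding primitive_def
proof (intro conjI allI ballI impI)
  have inj: "inj g"
    using g(1) by (rule orthogonal_transformation_inj)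
  show "g y \<in> dual_lattice M"
    using prim g(2) by (auto simp: primitive_def)
  show "g y \<noteq> 0"
  proof
    assume "g y = 0"
    then have "g y = g 0"
      using linear_0[OF orthogonal_transformation_linear[OF g(1)]] by simp
    then have "y = 0"
      by (rule injD[OF inj])
    with prim show False
      by (simp add: primitive_def)
  qed
  fix k :: nat and z assume z: "z \<in> dual_lattice M" "g y = of_nat k *\<^sub>R z"
  then obtain z' where z': "z' \<in> dual_lattice M" "z = g z'"
    using g(2) by blast
  then have "g y = g (of_nat k *\<^sub>R z')"
    using z(2) orthogonal_transformation_scaleR[OF g(1)] by simp
  then have "y = of_nat k *\<^sub>R z'"
    by (rule injD[OF inj])
  then show "k = 1"
    using prim z'(1) unfolding primitive_def by blast
qed

lemma is_facet_normal_image: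
  assumes g: "orthogonal_transformation g" "g ` P = P" "g ` dual_lattice M = dual_lattice M"
    and "is_facet_normal M P G y"
  shows "is_facet_normal M P (g ` G) (g y)"
proof -
  obtain b where b: "\<forall>x\<in>P. y \<bullet> x \<le> b" "G = {x\<in>P. y \<bullet> x = b}" and prim: "primitive M y"
    using assms(4) by (auto simp: is_facet_normal_def)
  have inner: "g u \<bullet> g v = u \<bullet> v" for u v
    using g(1) by (simp add: orthogonal_transformation_def)
  have preimage: "\<exists>x'\<in>P. x = g x'" if "x \<in> P" for x
    using that g(2) by blast
  have "g y \<bullet> x \<le> b" if "x \<in> P" for x
    using preimage[OF that] b(1) inner by auto
  moreover have "g ` G = {x\<in>P. g y \<bullet> x = b}"
  proof
    show "g ` G \<subseteq> {x\<in>P. g y \<bullet> x = b}"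
      using b(2) g(2) inner by auto
    show "{x\<in>P. g y \<bullet> x = b} \<subseteq> g ` G"
      using preimage b(2) inner by fastforce
  qed
  ultimately show ?thesis
    using primitive_image[OF g(1,3) prim] by (auto simp: is_facet_normal_def)
qed

lemma polytope_facet_exposed:
  assumes "polytope P" "F facet_of P"
  obtains a b where "a \<noteq> 0" "P \<subseteq> {x. a \<bullet> x \<le> b}" "F = P \<inter> {x. a \<bullet> x = b}"
proof -
  have F: "F face_of P" "F \<noteq> {}" "F \<noteq> P"
    using assms(2) by (auto simp: facet_of_def)
  then have "F exposed_face_of P"
    using exposed_face_of_polyhedron[OF polytope_imp_polyhedron[OF assms(1)]] by blast
  then obtain a b where ab: "P \<subseteq> {x. a \<bullet> x \<le> b}" "F = P \<inter> {x. a \<bullet> x = b}"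
    unfolding exposed_face_of_def by blast
  moreover have "a \<noteq> 0"
  proof
    assume "a = 0"
    then have "F = P \<or> F = {}"
      using ab(2) by auto
    with F(2,3) show False
      by blast
  qed
  ultimately show ?thesis
    using that by blast
qed

section \<open>The Weyl group orbit polytope\<close>

locale weyl_polytope =
  fixes R :: "'a::euclidean_space set" and \<alpha> :: "nat \<Rightarrow> 'a"
    and M \<Lambda> :: "'a set" and K :: "nat set"
  assumes root_system: "reduced_crystallographic_root_system R"
    and simple_system: "simple_system R \<alpha>"
    and lattice: "lattice_between R M"
    and finite_\<Lambda>: "finite \<Lambda>"
    and \<Lambda>_rational: "\<Lambda> \<subseteq> rat_span M"
    and full_dim: "aff_dim (polytope_of R \<Lambda>) = int DIM('a)"
    and K_simple: "K \<subseteq> {1..DIM('a)}"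
begin

abbreviation "W \<equiv> weyl_group R"
abbreviation "P \<equiv> polytope_of R \<Lambda>"
abbreviation "W\<^sub>K \<equiv> parabolic \<alpha> K"
abbreviation "orbit \<equiv> \<Union>w\<in>W. w ` \<Lambda>"

lemma finite_R: "finite R" and zero_notin_R: "0 \<notin> R" and span_R: "span R = UNIV"
  using root_system by (auto simp: reduced_crystallographic_root_system_def)

lemma simple_root_in_R: "i \<in> {1..DIM('a)} \<Longrightarrow> \<alpha> i \<in> R"
  using simple_system by (auto simp: simple_system_def)

lemma simple_root_nonzero: "i \<in> {1..DIM('a)} \<Longrightarrow> \<alpha> i \<noteq> 0"
  using simple_root_in_R zero_notin_R by force

lemma simple_root_in_lattice: "i \<in> {1..DIM('a)} \<Longrightarrow> \<alpha> i \<in> M"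
  using lattice_contains_roots[OF lattice finite_R simple_root_in_R] .

lemma simple_roots_combination_zero:
  assumes "J \<subseteq> {1..DIM('a)}" "(\<Sum>j\<in>J. d j *\<^sub>R \<alpha> j) = 0" "j \<in> J"
  shows "d j = 0"
proof -
  have inj: "inj_on \<alpha> J" and indep: "independent (\<alpha> ` J)"
    using simple_system inj_on_subset[OF _ assms(1)] independent_mono[OF _ image_mono[OF assms(1)]]
    by (auto simp: simple_system_def)
  define e where "e v = d (inv_into J \<alpha> v)" for v
  have "(\<Sum>v\<in>\<alpha> ` J. e v *\<^sub>R v) = (\<Sum>j\<in>J. d j *\<^sub>R \<alpha> j)"
    using inj by (simp add: sum.reindex e_def)
  with assms(2) have "(\<Sum>v\<in>\<alpha> ` J. e v *\<^sub>R v) = 0"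
    by simp
  with indep have "\<forall>v\<in>\<alpha> ` J. e v = 0"
    unfolding independent_explicit by blast
  with inj assms(3) show ?thesis
    by (auto simp: e_def)
qed

lemma span_M: "span M = UNIV"
proof -
  have "R \<subseteq> M"
    using lattice_contains_roots[OF lattice finite_R] by blast
  then show ?thesis
    using span_R span_mono by (metis top.extremum_uniqueI)
qed

lemma weyl_group_invariance:
  assumes "g \<in> W"
  shows "orthogonal_transformation g" "g ` R \<subseteq> R" "g ` M \<subseteq> M" "g ` dual_lattice M \<subseteq> dual_lattice M"
proof -
  have refl_dual: "refl a y \<in> dual_lattice M" if "a \<in> R" "y \<in> dual_lattice M" for a y
    using that lattice_refl[OF lattice finite_R] unfolding dual_lattice_def
    by (simp add: refl_self_adjoint)
  show "orthogonal_transformation g"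
    using assms gen_group_orthogonal orthogonal_transformation_refl
    unfolding weyl_group_def by blast
  have g: "g \<in> gen_group (refl ` R)"
    using assms by (simp add: weyl_group_def)
  show "g ` R \<subseteq> R"
    by (rule gen_group_preserves[OF _ g])
      (use root_system in \<open>auto simp: reduced_crystallographic_root_system_def\<close>)
  show "g ` M \<subseteq> M"
    by (rule gen_group_preserves[OF _ g]) (auto intro: lattice_refl[OF lattice finite_R])
  show "g ` dual_lattice M \<subseteq> dual_lattice M"
    by (rule gen_group_preserves[OF _ g]) (auto intro: refl_dual)
qed

lemma weyl_group_inverse:
  assumes "g \<in> W"
  obtains h where "h \<in> W" "h \<circ> g = id" "g \<circ> h = id"
proof -
  have "r \<circ> r = id" if "r \<in> refl ` R" for r
    using that by (auto simp: fun_eq_iff)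
  from gen_group_inverse[OF this] obtain h where "h \<in> W" "h \<circ> g = id" "g \<circ> h = id"
    using assms unfolding weyl_group_def by blast
  with that show ?thesis by blast
qed

lemma weyl_image_dual_lattice:
  assumes "g \<in> W"
  shows "g ` dual_lattice M = dual_lattice M"
proof -
  obtain h where h: "h \<in> W" "g \<circ> h = id"
    using weyl_group_inverse[OF assms] by blast
  have "dual_lattice M = g ` h ` dual_lattice M"
    using h(2) by (simp add: image_comp)
  also have "\<dots> \<subseteq> g ` dual_lattice M"
    using weyl_group_invariance(4)[OF h(1)] by blast
  finally show ?thesis
    using weyl_group_invariance(4)[OF assms] by blast
qed

lemma finite_weyl_group: "finite W"
proof -
  have "inj_on (\<lambda>g. restrict g R) W"
  proof
    fix g h assume gh: "g \<in> W" "h \<in> W" "restrict g R = restrict h R"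
    have "linear g" "linear h"
      using gh(1,2) weyl_group_invariance(1) orthogonal_transformation_linear by blast+
    then show "g = h"
      using linear_eq_on_span[of g h R] gh(3) span_R
      by (metis UNIV_I ext restrict_apply')
  qed
  moreover have "(\<lambda>g. restrict g R) ` W \<subseteq> (\<Pi>\<^sub>E x\<in>R. R)"
    by (auto simp: image_subset_iff dest: weyl_group_invariance(2))
  ultimately show ?thesis
    using finite_R by (meson finite_PiE finite_imageD finite_subset)
qed

lemma finite_orbit: "finite orbit"
  using finite_weyl_group finite_\<Lambda> by blast

lemma weyl_image_polytope:
  assumes "g \<in> W"
  shows "g ` P = P"
proof -
  have maps: "h ` P \<subseteq> P" if "h \<in> W" for h
  proof -
    have "h ` orbit \<subseteq> orbit"
    proof
      fix y assume "y \<in> h ` orbit"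
      then obtain w x where "w \<in> W" "x \<in> \<Lambda>" "y = (h \<circ> w) x"
        by auto
      moreover have "h \<circ> w \<in> W"
        using that \<open>w \<in> W\<close> by (simp add: weyl_group_def gen_group_comp)
      ultimately show "y \<in> orbit"
        by blast
    qed
    moreover have "linear h"
      using that weyl_group_invariance(1) orthogonal_transformation_linear by blast
    ultimately show ?thesis
      unfolding polytope_of_def by (metis convex_hull_linear_image hull_mono)
  qed
  obtain h where h: "h \<in> W" "g \<circ> h = id"
    using weyl_group_inverse[OF assms] by blast
  have "P = g ` h ` P"
    using h(2) by (simp add: image_comp)
  then show ?thesis
    using maps[OF assms] maps[OF h(1)] by blast
qed

lemma orbit_rational: "orbit \<subseteq> rat_span M"
proof
  fix y assume "y \<in> orbit"
  then obtain g x where g: "g \<in> W" and x: "x \<in> \<Lambda>" and y: "y = g x"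
    by blast
  obtain N where N: "N > 0" "of_int N *\<^sub>R x \<in> M"
    using x \<Lambda>_rational by (auto simp: rat_span_def)
  have "of_int N *\<^sub>R y = g (of_int N *\<^sub>R x)"
    using y orthogonal_transformation_scaleR[OF weyl_group_invariance(1)[OF g]] by simp
  also have "\<dots> \<in> M"
    using weyl_group_invariance(3)[OF g] N(2) by blast
  finally show "y \<in> rat_span M"
    using N(1) by (auto simp: rat_span_def)
qed

lemma polytope_P: "polytope P"
  unfolding polytope_of_def using finite_orbit polytope_convex_hull by blast

lemma finite_facets: "finite {F. F facet_of P}"
  by (rule finite_subset[OF _ finite_polytope_faces[OF polytope_P]]) (auto simp: facet_of_def)

lemma simple_coroots_independent:
  assumes "(\<Sum>i\<in>{1..DIM('a)}. c i *\<^sub>R coroot (\<alpha> i)) = 0"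
  shows "\<forall>i\<in>{1..DIM('a)}. c i = 0"
proof
  fix i assume i: "i \<in> {1..DIM('a)}"
  have "(\<Sum>i\<in>{1..DIM('a)}. (c i * (2 / (\<alpha> i \<bullet> \<alpha> i))) *\<^sub>R \<alpha> i) = 0"
    using assms(1) by (simp add: coroot_def)
  from simple_roots_combination_zero[OF order_refl this i]
  have "c i * (2 / (\<alpha> i \<bullet> \<alpha> i)) = 0" .
  with simple_root_nonzero[OF i] show "c i = 0"
    by simp
qed

lemma dual_lattice_orthogonal_to_differences:
  assumes "S \<subseteq> rat_span M" "x0 \<in> rat_span M" "dim ((\<lambda>x. x - x0) ` S) < DIM('a)"
  obtains y where "y \<in> dual_lattice M" "y \<noteq> 0" "(\<lambda>x. x - x0) ` S \<subseteq> {x. y \<bullet> x = 0}"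
proof -
  let ?n = "DIM('a)"
  let ?T = "(\<lambda>x. x - x0) ` S"
  obtain D where D: "D \<subseteq> ?T" "independent D" "?T \<subseteq> span D" "card D = dim ?T"
    by (rule basis_exists)
  have rational: "coroot (\<alpha> i) \<bullet> d \<in> \<rat>" if i: "i \<in> {1..?n}" and d: "d \<in> D" for i d
  proof -
    obtain x where "x \<in> S" "d = x - x0"
      using d D(1) by blast
    moreover have "coroot (\<alpha> i) \<in> dual_lattice M"
      using coroot_dual_lattice[OF lattice simple_root_in_R[OF i]] .
    ultimately show ?thesis
      using assms(1,2) dual_lattice_inner_rat_span[of x M "coroot (\<alpha> i)"]
        dual_lattice_inner_rat_span[of x0 M "coroot (\<alpha> i)"]
      by (auto simp: inner_diff_right intro: Rats_diff)
  qed
  have "card D < card {1..?n}"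
    using D(4) assms(3) by simp
  moreover have "(\<lambda>i. coroot (\<alpha> i)) ` {1..?n} \<subseteq> dual_lattice M"
    using coroot_dual_lattice[OF lattice simple_root_in_R] by blast
  ultimately have "\<exists>y\<in>dual_lattice M. y \<noteq> 0 \<and> (\<forall>d\<in>D. y \<bullet> d = 0)"
    by (rule dual_lattice_orthogonal_exists[OF finite_atLeastAtMost finiteI_independent[OF D(2)]
          _ _ simple_coroots_independent rational])
  then obtain y where y: "y \<in> dual_lattice M" "y \<noteq> 0" "\<forall>d\<in>D. y \<bullet> d = 0"
    by blast
  have "span D \<subseteq> {x. y \<bullet> x = 0}"
    by (rule span_minimal[OF _ subspace_hyperplane]) (use y(3) in auto)
  with D(3) have "?T \<subseteq> {x. y \<bullet> x = 0}"
    by (rule subset_trans)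
  with y(1,2) show ?thesis
    by (rule that)
qed

lemma dual_lattice_vector_normal_to_facet:
  assumes "F facet_of P" "a \<noteq> 0" "F \<subseteq> {x. a \<bullet> x = b}"
  obtains y where "y \<in> dual_lattice M" "y \<noteq> 0" "y = (y \<bullet> a / (a \<bullet> a)) *\<^sub>R a"
proof -
  have "F face_of convex hull orbit"
    using assms(1) unfolding facet_of_def polytope_of_def by blast
  then obtain S' where S': "S' \<subseteq> orbit" "F = convex hull S'"
    by (rule face_of_convex_hull_subset[OF finite_imp_compact[OF finite_orbit]])
  obtain x0 where x0: "x0 \<in> S'"
    using assms(1) S'(2) by (auto simp: facet_of_def)
  let ?T = "(\<lambda>x. x - x0) ` S'"
  have "aff_dim S' = int DIM('a) - 1"
    using facet_aff_dim[OF full_dim assms(1)] S'(2) by (simp add: aff_dim_convex_hull)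
  moreover have "aff_dim S' = int (dim ?T)"
    using x0 by (intro aff_dim_eq_dim_subtract hull_inc)
  ultimately have dim_T: "dim ?T = DIM('a) - 1"
    by linarith
  have "S' \<subseteq> F"
    unfolding S'(2) by (rule hull_subset)
  then have "a \<bullet> x = b" if "x \<in> S'" for x
    using that assms(3) by blast
  then have T_a: "?T \<subseteq> {x. a \<bullet> x = 0}"
    using x0 by (auto simp: inner_diff_right)
  have "S' \<subseteq> rat_span M"
    using S'(1) orbit_rational by blast
  moreover have "dim ?T < DIM('a)"
    using dim_T by simp
  ultimately obtain y where y: "y \<in> dual_lattice M" "y \<noteq> 0" "?T \<subseteq> {x. y \<bullet> x = 0}"
    using dual_lattice_orthogonal_to_differences x0 by blast
  then show ?thesis
    using that orthogonal_to_hyperplane_direction[OF assms(2) T_a dim_T] by blast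
qed

lemma facet_normal_exists:
  assumes "F facet_of P"
  shows "\<exists>y. is_facet_normal M P F y"
proof -
  obtain a b where a: "a \<noteq> 0" and ab: "P \<subseteq> {x. a \<bullet> x \<le> b}" "F = P \<inter> {x. a \<bullet> x = b}"
    using polytope_facet_exposed[OF polytope_P assms] by blast
  obtain y where y: "y \<in> dual_lattice M" "y \<noteq> 0" "y = (y \<bullet> a / (a \<bullet> a)) *\<^sub>R a"
    using dual_lattice_vector_normal_to_facet[OF assms a, of b] ab(2) by blast
  define s where "s = y \<bullet> a / (a \<bullet> a)"
  have ys: "y = s *\<^sub>R a"
    using y(3) by (simp add: s_def)
  define y' where "y' = of_int (if s > 0 then 1 else - 1) *\<^sub>R y"
  have y': "y' \<in> dual_lattice M" "y' = \<bar>s\<bar> *\<^sub>R a" "s \<noteq> 0"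
    using dual_lattice_scaleR_int[OF y(1)] y(2) by (auto simp: y'_def ys)
  then obtain k z where k: "k \<ge> 1" "y' = of_nat k *\<^sub>R z" "primitive M z"
    using dual_lattice_primitive_multiple[OF span_M y'(1)] a by auto
  define c where "c = \<bar>s\<bar> / of_nat k"
  have "z = (1 / of_nat k) *\<^sub>R y'"
    using k(1,2) by simp
  then have c: "c > 0" "z = c *\<^sub>R a"
    using k(1) y'(2,3) by (simp_all add: c_def)
  have "\<forall>x\<in>P. z \<bullet> x \<le> c * b"
    using ab(1) c mult_left_mono[of _ b c] by auto
  moreover have "F = {x\<in>P. z \<bullet> x = c * b}"
    using ab(2) c by auto
  ultimately show ?thesis
    using k(3) unfolding is_facet_normal_def by blast
qed

lemma facet_normal_is_facet_normal:
  assumes "F facet_of P"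
  shows "is_facet_normal M P F (facet_normal M P F)"
  using facet_normal_exists[OF assms] facet_normal_eqI[OF span_M full_dim assms] by metis

lemma facet_normal_dual_lattice: "F facet_of P \<Longrightarrow> facet_normal M P F \<in> dual_lattice M"
  using facet_normal_is_facet_normal by (auto simp: is_facet_normal_def primitive_def)

lemma facet_normal_weyl_image:
  assumes "g \<in> W" "F facet_of P"
  shows "facet_normal M P (g ` F) = g (facet_normal M P F)"
proof -
  have image: "is_facet_normal M P (w ` G) (w y)" if "w \<in> W" "is_facet_normal M P G y" for w G y
    using is_facet_normal_image[OF weyl_group_invariance(1) weyl_image_polytope weyl_image_dual_lattice]
      that by blast
  obtain h where h: "h \<in> W" "h \<circ> g = id" "g \<circ> h = id"
    using weyl_group_inverse[OF assms(1)] by blast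
  show ?thesis
    unfolding facet_normal_eq_The[of M P "g ` F"]
  proof (rule the_equality)
    show "is_facet_normal M P (g ` F) (g (facet_normal M P F))"
      using image[OF assms(1) facet_normal_is_facet_normal[OF assms(2)]] .
  next
    fix y assume y: "is_facet_normal M P (g ` F) y"
    have "h ` g ` F = F"
      using h(2) by (simp add: image_comp)
    then have "is_facet_normal M P F (h y)"
      using image[OF h(1) y] by simp
    then have "h y = facet_normal M P F"
      using facet_normal_eqI[OF span_M full_dim assms(2)] by simp
    then show "y = g (facet_normal M P F)"
      using h(3) by (metis comp_apply id_apply)
  qed
qed

section \<open>Wall normals and the coefficients C\<close>

lemma wall_normal_eqI:
  assumes "primitive M z" "c > 0" "z = - (c *\<^sub>R \<alpha> k)"
  shows "wall_normal M \<alpha> k = z"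
  unfolding wall_normal_def
proof (rule the_equality)
  show "primitive M z \<and> (\<exists>c>0. z = - (c *\<^sub>R \<alpha> k))"
    using assms by blast
next
  fix y assume "primitive M y \<and> (\<exists>c>0. y = - (c *\<^sub>R \<alpha> k))"
  then obtain c' where y: "primitive M y" "c' > 0" "y = - (c' *\<^sub>R \<alpha> k)"
    by blast
  then have y_z: "y = (c' / c) *\<^sub>R z"
    using assms(2,3) by simp
  then have "primitive M ((c' / c) *\<^sub>R z)"
    using y(1) by simp
  then have "c' / c = 1"
    by (rule primitive_positive_multiple_eq[OF span_M assms(1)]) (use y(2) assms(2) in simp)
  with y_z show "y = z"
    by simp
qed

lemma wall_normal_coroot:
  assumes "k \<in> {1..DIM('a)}"
  shows "primitive M (wall_normal M \<alpha> k)"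
    and "\<exists>m::nat. m \<ge> 1 \<and> coroot (\<alpha> k) = - (of_nat m *\<^sub>R wall_normal M \<alpha> k)"
proof -
  let ?a = "\<alpha> k"
  have "?a \<bullet> ?a > 0"
    using simple_root_nonzero[OF assms] by simp
  have "- coroot ?a \<in> dual_lattice M"
    using dual_lattice_scaleR_int[OF coroot_dual_lattice[OF lattice simple_root_in_R[OF assms]], of "- 1"]
    by simp
  moreover have "- coroot ?a \<noteq> 0"
    using \<open>?a \<bullet> ?a > 0\<close> by (auto simp: coroot_def)
  ultimately obtain m z where mz: "m \<ge> 1" "- coroot ?a = of_nat m *\<^sub>R z" "primitive M z"
    using dual_lattice_primitive_multiple[OF span_M] by metis
  have "z = (1 / of_nat m) *\<^sub>R (- coroot ?a)"
    using mz(1,2) by simp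
  then have "z = - ((2 / (?a \<bullet> ?a) / of_nat m) *\<^sub>R ?a)"
    by (simp add: coroot_def)
  moreover have "2 / (?a \<bullet> ?a) / of_nat m > 0"
    using mz(1) \<open>?a \<bullet> ?a > 0\<close> by simp
  ultimately have "wall_normal M \<alpha> k = z"
    using wall_normal_eqI[OF mz(3)] by blast
  moreover have "coroot ?a = - (of_nat m *\<^sub>R z)"
    using mz(2)[symmetric] by simp
  ultimately show "primitive M (wall_normal M \<alpha> k)"
    and "\<exists>m::nat. m \<ge> 1 \<and> coroot (\<alpha> k) = - (of_nat m *\<^sub>R wall_normal M \<alpha> k)"
    using mz(1,3) by auto
qed

lemma wall_normal_dual_lattice: "k \<in> {1..DIM('a)} \<Longrightarrow> wall_normal M \<alpha> k \<in> dual_lattice M"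
  using wall_normal_coroot(1) by (simp add: primitive_def)

lemma wall_normal_simple_root_multiple:
  assumes "k \<in> {1..DIM('a)}"
  shows "\<exists>c. c \<noteq> 0 \<and> wall_normal M \<alpha> k = c *\<^sub>R \<alpha> k"
proof -
  obtain m :: nat where m: "m \<ge> 1" "coroot (\<alpha> k) = - (of_nat m *\<^sub>R wall_normal M \<alpha> k)"
    using wall_normal_coroot(2)[OF assms] by blast
  then have "wall_normal M \<alpha> k = - ((1 / of_nat m) *\<^sub>R coroot (\<alpha> k))"
    by simp
  then have "wall_normal M \<alpha> k = (- 2 / (\<alpha> k \<bullet> \<alpha> k) / of_nat m) *\<^sub>R \<alpha> k"
    by (simp add: coroot_def)
  moreover have "- 2 / (\<alpha> k \<bullet> \<alpha> k) / of_nat m \<noteq> 0"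
    using m(1) simple_root_nonzero[OF assms] by simp
  ultimately show ?thesis
    by blast
qed

lemma refl_simple_root_displacement:
  assumes "k \<in> {1..DIM('a)}" "z \<in> dual_lattice M"
  obtains q :: int where "refl (\<alpha> k) z - z = of_int q *\<^sub>R wall_normal M \<alpha> k"
proof -
  obtain m :: nat where m: "coroot (\<alpha> k) = - (of_nat m *\<^sub>R wall_normal M \<alpha> k)"
    using wall_normal_coroot(2)[OF assms(1)] by blast
  have "z \<bullet> \<alpha> k \<in> \<int>"
    using assms(2) simple_root_in_lattice[OF assms(1)] by (simp add: dual_lattice_def)
  then obtain i where i: "z \<bullet> \<alpha> k = of_int i"
    by (elim Ints_cases)
  have "refl (\<alpha> k) z - z = of_int (i * int m) *\<^sub>R wall_normal M \<alpha> k"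
    by (simp add: refl_eq_coroot m i)
  then show ?thesis
    by (rule that)
qed

lemma parabolic_subset: "W\<^sub>K \<subseteq> W"
  unfolding parabolic_def weyl_group_def
  using K_simple simple_root_in_R by (intro gen_group_mono) blast

lemma parabolic_displacement:
  assumes "g \<in> W\<^sub>K" "y \<in> dual_lattice M"
  shows "\<exists>c::nat \<Rightarrow> rat. (\<forall>j. j \<notin> K \<longrightarrow> c j = 0)
           \<and> g y - y = (\<Sum>j\<in>K. of_rat (c j) *\<^sub>R wall_normal M \<alpha> j)"
  using assms(1) unfolding parabolic_def
proof induction
  case gen_id
  show ?case by (intro exI[of _ "\<lambda>_. 0"]) simp
next
  case (gen_comp r h)
  obtain k where k: "k \<in> K" "r = refl (\<alpha> k)"
    using gen_comp.hyps(1) by blast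
  obtain c where c: "\<forall>j. j \<notin> K \<longrightarrow> c j = 0" "h y - y = (\<Sum>j\<in>K. of_rat (c j) *\<^sub>R wall_normal M \<alpha> j)"
    using gen_comp.IH by blast
  have "h y \<in> dual_lattice M"
    using gen_comp.hyps(2) parabolic_subset weyl_group_invariance(4) assms(2)
    unfolding parabolic_def by blast
  then obtain q where q: "refl (\<alpha> k) (h y) - h y = of_int q *\<^sub>R wall_normal M \<alpha> k"
    using refl_simple_root_displacement k(1) K_simple by blast
  define c' where "c' j = c j + (if j = k then of_int q else 0)" for j
  have "(\<Sum>j\<in>K. of_rat (c' j) *\<^sub>R wall_normal M \<alpha> j)
      = (\<Sum>j\<in>K. of_rat (c j) *\<^sub>R wall_normal M \<alpha> j + (if j = k then of_int q *\<^sub>R wall_normal M \<alpha> k else 0))"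
    by (rule sum.cong) (simp_all add: c'_def of_rat_add scaleR_add_left)
  also have "\<dots> = (h y - y) + of_int q *\<^sub>R wall_normal M \<alpha> k"
    using k(1) finite_subset[OF K_simple] c(2) by (simp add: sum.distrib)
  also have "\<dots> = (r \<circ> h) y - y"
    using q k(2) by (simp add: algebra_simps)
  finally show ?case
    using c(1) k(1) by (intro exI[of _ c']) (auto simp: c'_def)
qed

lemma wall_normal_combination_unique:
  assumes "\<forall>j. j \<notin> K \<longrightarrow> c j = 0" "\<forall>j. j \<notin> K \<longrightarrow> c' j = 0"
    and "(\<Sum>j\<in>K. of_rat (c j) *\<^sub>R wall_normal M \<alpha> j) = (\<Sum>j\<in>K. of_rat (c' j) *\<^sub>R wall_normal M \<alpha> j)"
  shows "c = c'"
proof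
  fix j0
  have "\<forall>j\<in>{1..DIM('a)}. \<exists>c. c \<noteq> 0 \<and> wall_normal M \<alpha> j = c *\<^sub>R \<alpha> j"
    using wall_normal_simple_root_multiple by blast
  from bchoice[OF this] obtain w
    where w: "\<forall>j\<in>{1..DIM('a)}. w j \<noteq> 0 \<and> wall_normal M \<alpha> j = w j *\<^sub>R \<alpha> j"
    by blast
  have "(\<Sum>j\<in>K. ((of_rat (c j) - of_rat (c' j)) * w j) *\<^sub>R \<alpha> j)
      = (\<Sum>j\<in>K. of_rat (c j) *\<^sub>R wall_normal M \<alpha> j - of_rat (c' j) *\<^sub>R wall_normal M \<alpha> j)"
  proof (rule sum.cong[OF refl])
    fix j assume "j \<in> K"
    then have "wall_normal M \<alpha> j = w j *\<^sub>R \<alpha> j"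
      using w K_simple by blast
    then show "((of_rat (c j) - of_rat (c' j)) * w j) *\<^sub>R \<alpha> j
        = of_rat (c j) *\<^sub>R wall_normal M \<alpha> j - of_rat (c' j) *\<^sub>R wall_normal M \<alpha> j"
      by (simp add: scaleR_diff_left left_diff_distrib)
  qed
  also have "\<dots> = (\<Sum>j\<in>K. of_rat (c j) *\<^sub>R wall_normal M \<alpha> j) - (\<Sum>j\<in>K. of_rat (c' j) *\<^sub>R wall_normal M \<alpha> j)"
    by (rule sum_subtractf)
  finally have "(\<Sum>j\<in>K. ((of_rat (c j) - of_rat (c' j)) * w j) *\<^sub>R \<alpha> j) = 0"
    using assms(3) by simp
  show "c j0 = c' j0"
  proof (cases "j0 \<in> K")
    case True
    have "(of_rat (c j0) - of_rat (c' j0)) * w j0 = (0::real)"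
      by (rule simple_roots_combination_zero[OF K_simple \<open>_ = 0\<close> True])
    moreover have "w j0 \<noteq> 0"
      using w True K_simple by blast
    ultimately show ?thesis
      by simp
  qed (use assms(1,2) in simp)
qed

lemma C_coef_eq:
  assumes "rep \<sigma> \<in> W\<^sub>K" "F facet_of P"
  shows "rep \<sigma> (facet_normal M P F) - facet_normal M P F
           = (\<Sum>j\<in>K. of_rat (C_coef M P \<alpha> K F \<sigma> j) *\<^sub>R wall_normal M \<alpha> j)"
proof -
  let ?Q = "\<lambda>c::nat \<Rightarrow> rat. (\<forall>j. j \<notin> K \<longrightarrow> c j = 0) \<and>
      rep \<sigma> (facet_normal M P F) - facet_normal M P F = (\<Sum>j\<in>K. of_rat (c j) *\<^sub>R wall_normal M \<alpha> j)"
  obtain c where c: "?Q c"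
    using parabolic_displacement[OF assms(1) facet_normal_dual_lattice[OF assms(2)]] by blast
  have "\<exists>!c. ?Q c"
  proof (rule ex1I)
    show "?Q c" by (rule c)
  next
    fix c' assume "?Q c'"
    with c show "c' = c"
      by (intro wall_normal_combination_unique) auto
  qed
  then have "?Q (THE c. ?Q c)"
    by (rule theI')
  moreover have "C_coef M P \<alpha> K F \<sigma> = (THE c. ?Q c)"
    by (simp add: C_coef_def fun_eq_iff)
  ultimately show ?thesis
    by simp
qed

section \<open>The generators of J_K\<close>

abbreviation "facets\<^sub>K \<equiv> facets_K P \<alpha> K"
abbreviation "cosets F \<equiv> left_cosets W\<^sub>K (stabilizer W\<^sub>K F)"

lemma finite_facets_K: "finite facets\<^sub>K"
  by (rule finite_subset[OF _ finite_facets]) (auto simp: facets_K_def)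

lemma finite_cosets: "finite (cosets F)"
proof -
  have "cosets F = (\<lambda>s. (\<lambda>h. s \<circ> h) ` stabilizer W\<^sub>K F) ` W\<^sub>K"
    unfolding left_cosets_def by blast
  then show ?thesis
    using finite_subset[OF parabolic_subset finite_weyl_group] by simp
qed

lemma rep_in_parabolic:
  assumes "\<sigma> \<in> cosets F"
  shows "rep \<sigma> \<in> W\<^sub>K"
proof -
  obtain s where s: "s \<in> W\<^sub>K" "\<sigma> = (\<lambda>h. s \<circ> h) ` stabilizer W\<^sub>K F"
    using assms unfolding left_cosets_def by blast
  have "id \<in> stabilizer W\<^sub>K F"
    by (simp add: stabilizer_def parabolic_def gen_group.gen_id)
  then have "rep \<sigma> \<in> \<sigma>"
    unfolding rep_def s(2) by (rule someI[of _ "s \<circ> id", OF imageI])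
  then obtain h where "h \<in> W\<^sub>K" "rep \<sigma> = s \<circ> h"
    using s(2) by (auto simp: stabilizer_def)
  with s(1) show ?thesis
    by (simp add: parabolic_def gen_group_comp)
qed

lemma index_set_eq_Sigma: "index_set P \<alpha> K = Sigma facets\<^sub>K cosets"
  by (auto simp: index_set_def)

lemma J_P_coefficient:
  assumes u: "u \<in> M" and F: "F \<in> facets\<^sub>K" and \<sigma>: "\<sigma> \<in> cosets F"
  shows "to_rat (u \<bullet> facet_normal M P F)
           + (\<Sum>k\<in>K. to_rat (u \<bullet> wall_normal M \<alpha> k) * C_coef M P \<alpha> K F \<sigma> k)
         = to_rat (u \<bullet> facet_normal M P (rep \<sigma> ` F))"
proof -
  let ?l = "facet_normal M P F"
  have facet: "F facet_of P"
    using F by (simp add: facets_K_def)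
  have rep: "rep \<sigma> \<in> W\<^sub>K"
    by (rule rep_in_parabolic[OF \<sigma>])
  have rational: "u \<bullet> y \<in> \<rat>" if "y \<in> dual_lattice M" for y
    using that u Ints_subset_Rats by (auto simp: dual_lattice_def inner_commute)
  have wall: "of_rat (to_rat (u \<bullet> wall_normal M \<alpha> k)) = u \<bullet> wall_normal M \<alpha> k" if "k \<in> K" for k
    using that K_simple wall_normal_dual_lattice rational of_rat_to_rat by blast
  have "u \<bullet> facet_normal M P (rep \<sigma> ` F) = u \<bullet> ?l + u \<bullet> (rep \<sigma> ?l - ?l)"
    using facet_normal_weyl_image[OF subsetD[OF parabolic_subset rep] facet]
    by (simp add: inner_diff_right)
  also have "\<dots> = u \<bullet> ?l + (\<Sum>k\<in>K. of_rat (C_coef M P \<alpha> K F \<sigma> k) * (u \<bullet> wall_normal M \<alpha> k))"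
    unfolding C_coef_eq[OF rep facet] by (simp add: inner_sum_right)
  also have "\<dots> = of_rat (to_rat (u \<bullet> ?l)
      + (\<Sum>k\<in>K. to_rat (u \<bullet> wall_normal M \<alpha> k) * C_coef M P \<alpha> K F \<sigma> k))"
    using of_rat_to_rat[OF rational[OF facet_normal_dual_lattice[OF facet]]] wall
    by (simp add: of_rat_add of_rat_sum of_rat_mult mult.commute)
  finally show ?thesis
    by simp
qed

lemma Phi_img_J_K_generator:
  assumes u: "u \<in> M"
  shows "subst_hom (Phi_img M P \<alpha> K)
           ((\<Sum>F\<in>facets\<^sub>K. Const (to_rat (u \<bullet> facet_normal M P F)) * Var (Inl F))
             + (\<Sum>k\<in>K. Const (to_rat (u \<bullet> wall_normal M \<alpha> k)) * Var (Inr k)))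
         = (\<Sum>(F, \<sigma>)\<in>index_set P \<alpha> K. Const (to_rat (u \<bullet> facet_normal M P (rep \<sigma> ` F))) * Var (F, \<sigma>))"
proof -
  let ?a = "\<lambda>F. to_rat (u \<bullet> facet_normal M P F)"
  let ?b = "\<lambda>k. to_rat (u \<bullet> wall_normal M \<alpha> k)"
  let ?C = "C_coef M P \<alpha> K"
  let ?I = "Sigma facets\<^sub>K cosets"
  have "subst_hom (Phi_img M P \<alpha> K)
      ((\<Sum>F\<in>facets\<^sub>K. Const (?a F) * Var (Inl F)) + (\<Sum>k\<in>K. Const (?b k) * Var (Inr k)))
    = (\<Sum>F\<in>facets\<^sub>K. Const (?a F) * Phi_img M P \<alpha> K (Inl F))
      + (\<Sum>k\<in>K. Const (?b k) * Phi_img M P \<alpha> K (Inr k))"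
    by (simp add: subst_hom_add subst_hom_sum subst_hom_mult subst_hom_Const subst_hom_Var)
  also have "(\<Sum>F\<in>facets\<^sub>K. Const (?a F) * Phi_img M P \<alpha> K (Inl F))
      = (\<Sum>(F, \<sigma>)\<in>?I. Const (?a F) * Var (F, \<sigma>))"
    by (simp add: Phi_img_def sum_distrib_left sum.Sigma[OF finite_facets_K] finite_cosets)
  also have "(\<Sum>k\<in>K. Const (?b k) * Phi_img M P \<alpha> K (Inr k))
      = (\<Sum>k\<in>K. \<Sum>(G, \<sigma>)\<in>?I. Const (?b k * ?C G \<sigma> k) * Var (G, \<sigma>))"
    by (rule sum.cong)
      (simp_all add: Phi_img_def index_set_eq_Sigma sum_distrib_left case_prod_unfold Const_mult mult.assoc)
  also have "\<dots> = (\<Sum>(G, \<sigma>)\<in>?I. Const (\<Sum>k\<in>K. ?b k * ?C G \<sigma> k) * Var (G, \<sigma>))"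
    unfolding case_prod_unfold
    by (subst sum.swap) (simp add: Const_sum sum_distrib_right)
  also have "(\<Sum>(F, \<sigma>)\<in>?I. Const (?a F) * Var (F, \<sigma>))
      + (\<Sum>(G, \<sigma>)\<in>?I. Const (\<Sum>k\<in>K. ?b k * ?C G \<sigma> k) * Var (G, \<sigma>))
    = (\<Sum>(F, \<sigma>)\<in>?I. Const (?a F + (\<Sum>k\<in>K. ?b k * ?C F \<sigma> k)) * Var (F, \<sigma>))"
    by (simp add: sum.distrib[symmetric] case_prod_unfold Const_add distrib_right)
  also have "\<dots> = (\<Sum>(F, \<sigma>)\<in>?I. Const (to_rat (u \<bullet> facet_normal M P (rep \<sigma> ` F))) * Var (F, \<sigma>))"
    by (rule sum.cong) (auto simp: J_P_coefficient[OF u])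
  finally show ?thesis
    unfolding index_set_eq_Sigma .
qed

end

theorem lemma4p3:
  fixes R :: "'a::euclidean_space set" and \<alpha> :: "nat \<Rightarrow> 'a"
    and M \<Lambda> :: "'a set" and K :: "nat set"
  assumes "reduced_crystallographic_root_system R"
    and "simple_system R \<alpha>"
    and "lattice_between R M"
    and "finite \<Lambda>"
    and "\<Lambda> \<subseteq> chamber \<alpha> {1..DIM('a)} \<inter> rat_span M"
    and "aff_dim (polytope_of R \<Lambda>) = int DIM('a)"
    and "simple_polytope (polytope_of R \<Lambda>)"
    and "nondegenerate \<alpha> (polytope_of R \<Lambda>)"
    and "K \<subseteq> {1..DIM('a)}"
  shows "ideal_gen (J_K_gens M (polytope_of R \<Lambda>) \<alpha> K)
           \<subseteq> {p. subst_hom (Phi_img M (polytope_of R \<Lambda>) \<alpha> K) p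
                  \<in> ideal_gen (I_P_gens (polytope_of R \<Lambda>) \<alpha> K \<union> J_P_gens M (polytope_of R \<Lambda>) \<alpha> K)}"
proof -
  interpret weyl_polytope R \<alpha> M \<Lambda> K
    using assms(1-6,9) by unfold_locales auto
  have "subst_hom (Phi_img M P \<alpha> K) g \<in> I_P_gens P \<alpha> K \<union> J_P_gens M P \<alpha> K"
    if g: "g \<in> J_K_gens M P \<alpha> K" for g
  proof -
    obtain u where "u \<in> M"
      and "g = (\<Sum>F\<in>facets\<^sub>K. Const (to_rat (u \<bullet> facet_normal M P F)) * Var (Inl F))
             + (\<Sum>k\<in>K. Const (to_rat (u \<bullet> wall_normal M \<alpha> k)) * Var (Inr k))"
      using g unfolding J_K_gens_def by blast
    then show ?thesis
      unfolding J_P_gens_def using Phi_img_J_K_generator by blast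
  qed
  then show ?thesis
    using subst_hom_ideal_gen by blast
qed

end
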